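(* Let $n\ge3$, $k\in\mathbf{N}$, $\mathbf{A}$ an alphabet of $n$ letters, and $$\mathbf{S}_3^{n,k}=\{XY : X,Y\in\mathbf{A}^*,\ |X|=|Y|\ge k+1,\ d(X,Y)\le k\}.$$ Then $\mathbf{S}_3^{n,k}$ is incomplete, i.e. there exist arbitrarily long (indeed, an infinite) words over $\mathbf{A}$ free from $\mathbf{S}_3^{n,k}$.
   Context: A word over $\mathbf{A}$ is a finite sequence of letters; $\mathbf{A}^*$ is the set of all words; $|X|$ is the length of $X$. For words of equal length, $d(X,Y)$ is the Hamming distance. A subword is a block of consecutive letters. For $\mathbf{S}\subseteq\mathbf{A}^*$, a word (finite or infinite) is free from $\mathbf{S}$ if none of its finite subwords belongs to $\mathbf{S}$. $\mathbf{S}$ is complete if there is $k\in\mathbf{N}$ such that every word free from $\mathbf{S}$ has length less than $k$; otherwise it is incomplete. *)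

theory Defs
  imports Main
begin

definition hamming :: "'a list \<Rightarrow> 'a list \<Rightarrow> nat" where
  "hamming X Y = length (filter (\<lambda>(x, y). x \<noteq> y) (zip X Y))"

definition subword :: "'a list \<Rightarrow> 'a list \<Rightarrow> bool" where
  "subword u w \<longleftrightarrow> (\<exists>p s. w = p @ u @ s)"

definition free_from :: "'a list set \<Rightarrow> 'a list \<Rightarrow> bool" where
  "free_from S w \<longleftrightarrow> (\<forall>u. subword u w \<longrightarrow> u \<notin> S)"

definition complete :: "'a set \<Rightarrow> 'a list set \<Rightarrow> bool" where
  "complete A S \<longleftrightarrow> (\<exists>k::nat. \<forall>w \<in> lists A. free_from S w \<longrightarrow> length w < k)"

definition incomplete :: "'a set \<Rightarrow> 'a list set \<Rightarrow> bool" where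
  "incomplete A S \<longleftrightarrow> \<not> complete A S"

definition S3 :: "'a set \<Rightarrow> nat \<Rightarrow> 'a list set" where
  "S3 A k = {X @ Y | X Y. X \<in> lists A \<and> Y \<in> lists A \<and> length X = length Y
              \<and> length X \<ge> k + 1 \<and> hamming X Y \<le> k}"

end

theory Submission
  imports Defs
begin

(* The first differences of the overlap-free Thue-Morse word form a square-free word u over
   three letters.  Repeat every letter of u B = k + 1 times.  If XY is a factor of the stretched
   word with |X| = |Y| = m = t B + s >= B and s < B, the position of X at offset c in block q is
   compared with block q + t, or with block q + t + 1 when c + s >= B.  Among the offsets whose
   first position lies in a common block, square-freeness with period t gives a mismatch for
   every offset compared at distance t.  An offset compared at distance t + 1 may have none, but
   then square-freeness with period t + 1 together with u q ~= u (q + 1) makes every position of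
   the final incomplete period a mismatch, and there are enough of those.  Hence d(X, Y) >= B. *)

definition overlap_free :: "(nat \<Rightarrow> 'a) \<Rightarrow> bool" where
  "overlap_free u \<longleftrightarrow> (\<forall>i p. 0 < p \<longrightarrow> (\<exists>j\<le>p. u (i + j) \<noteq> u (i + p + j)))"

definition square_free :: "(nat \<Rightarrow> 'a) \<Rightarrow> bool" where
  "square_free u \<longleftrightarrow> (\<forall>i p. 0 < p \<longrightarrow> (\<exists>j<p. u (i + j) \<noteq> u (i + p + j)))"

lemma square_freeD:
  assumes "square_free u" and "0 < p" and "\<And>j. j < p \<Longrightarrow> u (i + j) = u (i + p + j)"
  shows False
  using assms unfolding square_free_def by blast

lemma square_free_Suc_neq:
  assumes "square_free u"
  shows "u (Suc i) \<noteq> u i"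
  using square_freeD[OF assms, of 1 i] by auto

lemma square_free_comp:
  assumes "square_free u" and "inj_on f (range u)"
  shows "square_free (f \<circ> u)"
  using assms unfolding square_free_def inj_on_def by (metis comp_apply rangeI)

fun thue_morse :: "nat \<Rightarrow> bool" where
  "thue_morse n =
     (if n = 0 then False else if even n then thue_morse (n div 2) else \<not> thue_morse (n div 2))"

declare thue_morse.simps [simp del]

lemma thue_morse_0 [simp]: "\<not> thue_morse 0"
  by (simp add: thue_morse.simps)

lemma thue_morse_double_add:
  assumes "b < 2"
  shows "thue_morse (2 * n + b) \<longleftrightarrow> thue_morse n \<noteq> (b = 1)"
  using assms by (subst thue_morse.simps) (auto simp: less_2_cases_iff)

lemma thue_morse_Suc_double_neq:
  "thue_morse (Suc (2 * n)) \<noteq> thue_morse (2 * n)"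
  using thue_morse_double_add[of 0 n] thue_morse_double_add[of 1 n] by auto

lemma thue_morse_no_odd_overlap:
  assumes odd: "odd p" and per: "\<And>j. j \<le> p \<Longrightarrow> thue_morse (i + j) = thue_morse (i + p + j)"
  shows False
proof -
  have step: "thue_morse (Suc (i + j)) \<noteq> thue_morse (i + j)" if "j < p" for j
  proof (cases "even (i + j)")
    case True
    then show ?thesis by (metis evenE thue_morse_Suc_double_neq)
  next
    case False
    with odd have "even (i + p + j)" by simp
    then have "thue_morse (Suc (i + p + j)) \<noteq> thue_morse (i + p + j)"
      by (metis evenE thue_morse_Suc_double_neq)
    with per[of j] per[of "Suc j"] that show ?thesis by simp
  qed
  have "thue_morse (i + j) = (thue_morse i = even j)" if "j \<le> p" for j
    using that by (induction j) (use step in auto)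
  with per[of 0] odd show False by simp
qed

lemma overlap_free_thue_morse: "overlap_free thue_morse"
  unfolding overlap_free_def
proof (intro allI impI)
  fix i p :: nat
  assume "0 < p"
  then show "\<exists>j\<le>p. thue_morse (i + j) \<noteq> thue_morse (i + p + j)"
  proof (induction p arbitrary: i rule: less_induct)
    case (less p)
    show ?case
    proof (rule ccontr)
      assume "\<not> ?case"
      then have per: "\<And>j. j \<le> p \<Longrightarrow> thue_morse (i + j) = thue_morse (i + p + j)" by auto
      show False
      proof (cases "even p")
        case True
        \<comment> \<open>an overlap of period 2 h at i yields one of period h at i div 2\<close>
        then obtain h where p: "p = 2 * h" by blast
        define i' b where "i' = i div 2" and "b = i mod 2"
        have "b < 2" and i: "i = 2 * i' + b"
          unfolding i'_def b_def by simp_all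
        have "thue_morse (i' + j) = thue_morse (i' + h + j)" if "j \<le> h" for j
          using per[of "2 * j"] that thue_morse_double_add[OF \<open>b < 2\<close>, of "i' + j"]
            thue_morse_double_add[OF \<open>b < 2\<close>, of "i' + h + j"]
          by (auto simp: i p algebra_simps)
        with less.IH[of h i'] less.prems p show False by auto
      qed (use per thue_morse_no_odd_overlap in blast)
    qed
  qed
qed

lemma square_free_differences:
  fixes u :: "nat \<Rightarrow> bool"
  assumes "overlap_free u"
  shows "square_free (\<lambda>n. of_bool (u (Suc n)) - of_bool (u n) :: int)"
  unfolding square_free_def
proof (intro allI impI, rule ccontr)
  fix i p :: nat
  assume "0 < p"
  define T where "T n = (of_bool (u n) :: int)" for n
  assume "\<not> (\<exists>j<p. T (Suc (i + j)) - T (i + j) \<noteq> T (Suc (i + p + j)) - T (i + p + j))"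
  then have same_steps: "T (Suc (i + j)) - T (i + j) = T (Suc (i + p + j)) - T (i + p + j)"
    if "j < p" for j
    using that by (simp add: T_def)
  have telescope: "T (i + j) - T i = T (i + p + j) - T (i + p)" if "j \<le> p" for j
    using that
  proof (induction j)
    case (Suc j)
    then have "j < p" and "T (i + j) - T i = T (i + p + j) - T (i + p)" by simp_all
    with same_steps[of j] show ?case by simp
  qed simp
  show False
  proof (cases "T i = T (i + p)")
    case True
    then have "u (i + j) = u (i + p + j)" if "j \<le> p" for j
      using telescope[OF that] by (simp add: T_def of_bool_def split: if_splits)
    with assms \<open>0 < p\<close> show False
      unfolding overlap_free_def by blast
  next
    case False
    \<comment> \<open>then T i, T (i + p), T (i + 2 p) would be a non-constant progression in {0, 1}\<close>
    with telescope[of p] show False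
      by (simp add: T_def of_bool_def split: if_splits)
  qed
qed

lemma square_free_long_matches_escape:
  assumes sf: "square_free u" and "0 < t"
    and long_match: "\<And>l. l < t \<Longrightarrow> u (\<sigma> + l) = u (\<sigma> + l + t + 1)"
  shows "u (\<sigma> + t) \<noteq> u (\<sigma> + t + t)" and "u (\<sigma> + t) \<noteq> u (\<sigma> + t + t + 1)"
proof -
  show "u (\<sigma> + t) \<noteq> u (\<sigma> + t + t)"
    using long_match[of "t - 1"] square_free_Suc_neq[OF sf, of "\<sigma> + t - 1"] \<open>0 < t\<close>
    by (simp add: ac_simps)
  show "u (\<sigma> + t) \<noteq> u (\<sigma> + t + t + 1)"
  proof
    assume "u (\<sigma> + t) = u (\<sigma> + t + t + 1)"
    then have "u (\<sigma> + j) = u (\<sigma> + (t + 1) + j)" if "j < t + 1" for j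
      using long_match[of j] that by (cases "j = t") (simp_all add: ac_simps)
    then show False
      using square_freeD[OF sf, of "t + 1" \<sigma>] by simp
  qed
qed

lemma square_free_column_mismatches:
  fixes u :: "nat \<Rightarrow> 'a" and F :: "nat \<Rightarrow> bool"
  assumes sf: "square_free u" and "0 < t" and "finite C" and "finite D"
    and long: "card {c \<in> C. F c} \<le> card D"
  shows "card C \<le> (\<Sum>c\<in>C. \<Sum>l<t. of_bool (u (\<sigma> + l) \<noteq> u (\<sigma> + l + t + of_bool (F c))))
    + (\<Sum>c\<in>D. of_bool (u (\<sigma> + t) \<noteq> u (\<sigma> + t + t + of_bool (F c))))"
    (is "_ \<le> (\<Sum>c\<in>C. ?col c) + (\<Sum>c\<in>D. ?last c)")
proof -
  have col_ge: "1 \<le> ?col c" if "l < t" and "u (\<sigma> + l) \<noteq> u (\<sigma> + l + t + of_bool (F c))" for c l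
    using that member_le_sum[of l "{..<t}"
        "\<lambda>l. of_bool (u (\<sigma> + l) \<noteq> u (\<sigma> + l + t + of_bool (F c))) :: nat"]
    by simp
  obtain l where "l < t" and "u (\<sigma> + l) \<noteq> u (\<sigma> + t + l)"
    using sf \<open>0 < t\<close> unfolding square_free_def by blast
  then have short: "1 \<le> ?col c" if "\<not> F c" for c
    using col_ge[of l c] that by (simp add: ac_simps)
  have card_C: "card C = (\<Sum>c\<in>C. of_bool (\<not> F c)) + card {c \<in> C. F c}"
  proof -
    have "C - {c. F c} = C \<inter> {c. \<not> F c}"
      by blast
    then show ?thesis
      using \<open>finite C\<close> card_Int_Diff[of C "{c. F c}"]
      by (simp add: sum_of_bool_eq Collect_conj_eq Int_commute)
  qed
  show ?thesis
  proof (cases "\<exists>l<t. u (\<sigma> + l) \<noteq> u (\<sigma> + l + t + 1)")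
    case True
    then obtain l' where "l' < t" and "u (\<sigma> + l') \<noteq> u (\<sigma> + l' + t + 1)"
      by blast
    then have "1 \<le> ?col c" if "F c" for c
      using col_ge[of l' c] that by simp
    with short have "1 \<le> ?col c" for c
      by blast
    then have "card C \<le> (\<Sum>c\<in>C. ?col c)"
      using sum_mono[of C "\<lambda>_. 1::nat" ?col] by simp
    then show ?thesis
      by linarith
  next
    case False
    then have "u (\<sigma> + t) \<noteq> u (\<sigma> + t + t)" and "u (\<sigma> + t) \<noteq> u (\<sigma> + t + t + 1)"
      using square_free_long_matches_escape[OF sf \<open>0 < t\<close>] by blast+
    then have "?last c = 1" for c
      by (cases "F c") auto
    then have "card {c \<in> C. F c} \<le> (\<Sum>c\<in>D. ?last c)"
      using long by simp
    moreover have "(\<Sum>c\<in>C. of_bool (\<not> F c)) \<le> (\<Sum>c\<in>C. ?col c)"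
      using short by (intro sum_mono) simp
    ultimately show ?thesis
      using card_C by linarith
  qed
qed

lemma mult_add_div_carry:
  fixes B q c t s :: nat
  assumes "c < B" and "s < B"
  shows "(q * B + c + (t * B + s)) div B = q + t + of_bool (B \<le> c + s)"
proof -
  have "(q * B + c + (t * B + s)) div B = (c + s + (q + t) * B) div B"
    by (simp add: algebra_simps)
  also have "\<dots> = (c + s) div B + (q + t)"
    using assms by simp
  also have "(c + s) div B = of_bool (B \<le> c + s)"
    using assms by (intro div_nat_eqI) auto
  finally show ?thesis
    by simp
qed

lemma sum_block_div:
  fixes f :: "nat \<Rightarrow> nat \<Rightarrow> 'c::comm_monoid_add"
  assumes "y \<le> B" and "s < B"
  shows "(\<Sum>j\<in>{q * B + x..<q * B + y}. f (j div B) ((j + (t * B + s)) div B))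
    = (\<Sum>c\<in>{x..<y}. f q (q + t + of_bool (B \<le> c + s)))"
proof -
  let ?h = "\<lambda>j. f (j div B) ((j + (t * B + s)) div B)"
  have "sum ?h {q * B + x..<q * B + y} = (\<Sum>c\<in>{x..<y}. ?h (q * B + c))"
    using sum.shift_bounds_nat_ivl[of ?h x "q * B" y] by (simp add: ac_simps)
  also have "\<dots> = (\<Sum>c\<in>{x..<y}. f q (q + t + of_bool (B \<le> c + s)))"
    using assms by (intro sum.cong) (auto simp: mult_add_div_carry)
  finally show ?thesis .
qed

lemma sum_two_blocks_div:
  fixes f :: "nat \<Rightarrow> nat \<Rightarrow> 'c::comm_monoid_add"
  assumes "x \<le> B" and "x \<le> y" and "y \<le> B + B" and "s < B"
  shows "(\<Sum>j\<in>{q * B + x..<q * B + y}. f (j div B) ((j + (t * B + s)) div B))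
    = (\<Sum>c\<in>{x..<min B y}. f q (q + t + of_bool (B \<le> c + s)))
      + (\<Sum>c\<in>{0..<y - B}. f (Suc q) (Suc q + t + of_bool (B \<le> c + s)))"
proof -
  let ?h = "\<lambda>j. f (j div B) ((j + (t * B + s)) div B)"
  have "{q * B + x..<q * B + y}
      = {q * B + x..<q * B + min B y} \<union> {Suc q * B + 0..<Suc q * B + (y - B)}"
    using assms by auto
  then have "sum ?h {q * B + x..<q * B + y}
      = sum ?h {q * B + x..<q * B + min B y} + sum ?h {Suc q * B + 0..<Suc q * B + (y - B)}"
    by (simp add: sum.union_disjoint)
  moreover have "y - B \<le> B"
    using assms by simp
  ultimately show ?thesis
    using assms by (simp only: sum_block_div[OF min.cobounded1] sum_block_div[OF \<open>y - B \<le> B\<close>])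
qed

lemma sum_interval_blocks:
  fixes a n k :: nat
  shows "(\<Sum>j\<in>{a..<a + n * k}. g j) = (\<Sum>l<n. \<Sum>j\<in>{a + l * k..<a + l * k + k}. g j)"
proof (induction n)
  case (Suc n)
  have "(\<Sum>j\<in>{a..<a + Suc n * k}. g j)
      = (\<Sum>j\<in>{a..<a + n * k}. g j) + (\<Sum>j\<in>{a + n * k..<a + n * k + k}. g j)"
    by (simp add: sum.atLeastLessThan_concat add.assoc add.commute[of k])
  with Suc.IH show ?case
    by simp
qed simp

(* Offsets c >= r of the window start in block q, offsets c < r in block q + 1; each offset
   is met once per period, and the offsets r, ..., r + s - 1 (mod B) once more in the tail. *)
lemma sum_window_by_offsets:
  fixes f :: "nat \<Rightarrow> nat \<Rightarrow> 'c::comm_monoid_add" and q r s t B :: nat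
  assumes "r < B" and "s < B"
  defines "m \<equiv> t * B + s" and "g \<equiv> \<lambda>p c. f p (p + t + of_bool (B \<le> c + s))"
  shows "(\<Sum>j\<in>{q * B + r..<q * B + r + m}. f (j div B) ((j + m) div B))
    = ((\<Sum>c\<in>{r..<B}. \<Sum>l<t. g (q + l) c) + (\<Sum>c\<in>{r..<min B (r + s)}. g (q + t) c))
      + ((\<Sum>c\<in>{0..<r}. \<Sum>l<t. g (Suc q + l) c) + (\<Sum>c\<in>{0..<r + s - B}. g (Suc q + t) c))"
proof -
  let ?h = "\<lambda>j. f (j div B) ((j + m) div B)"
  have two_blocks: "sum ?h {p * B + r..<p * B + y}
      = (\<Sum>c\<in>{r..<min B y}. g p c) + (\<Sum>c\<in>{0..<y - B}. g (Suc p) c)"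
    if "r \<le> y" and "y \<le> B + B" for p y
    using sum_two_blocks_div[where q = p and t = t and f = f] that assms by (simp add: m_def g_def)
  have "sum ?h {q * B + r..<q * B + r + t * B}
      = (\<Sum>l<t. sum ?h {q * B + r + l * B..<q * B + r + l * B + B})"
    by (rule sum_interval_blocks)
  also have "\<dots> = (\<Sum>l<t. (\<Sum>c\<in>{r..<B}. g (q + l) c) + (\<Sum>c\<in>{0..<r}. g (Suc q + l) c))"
  proof (rule sum.cong[OF refl])
    fix l
    have "{q * B + r + l * B..<q * B + r + l * B + B} = {(q + l) * B + r..<(q + l) * B + (r + B)}"
      by (simp add: algebra_simps)
    then show "sum ?h {q * B + r + l * B..<q * B + r + l * B + B}
      = (\<Sum>c\<in>{r..<B}. g (q + l) c) + (\<Sum>c\<in>{0..<r}. g (Suc q + l) c)"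
      using two_blocks[of "r + B" "q + l"] \<open>r < B\<close> by simp
  qed
  also have "\<dots> = (\<Sum>c\<in>{r..<B}. \<Sum>l<t. g (q + l) c) + (\<Sum>c\<in>{0..<r}. \<Sum>l<t. g (Suc q + l) c)"
    by (simp add: sum.distrib sum.swap[of _ "{..<t}"])
  finally have periods: "sum ?h {q * B + r..<q * B + r + t * B} = \<dots>" .
  have tail: "sum ?h {q * B + r + t * B..<q * B + r + m}
      = (\<Sum>c\<in>{r..<min B (r + s)}. g (q + t) c) + (\<Sum>c\<in>{0..<r + s - B}. g (Suc q + t) c)"
    using two_blocks[of "r + s" "q + t"] assms by (simp add: m_def algebra_simps)
  have "sum ?h {q * B + r..<q * B + r + m}
      = sum ?h {q * B + r..<q * B + r + t * B} + sum ?h {q * B + r + t * B..<q * B + r + m}"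
    by (rule sum.atLeastLessThan_concat[symmetric]) (simp_all add: m_def)
  then show ?thesis
    unfolding periods tail by (simp only: ac_simps)
qed

lemma square_free_blowup_mismatches:
  fixes u :: "nat \<Rightarrow> 'a" and B m i :: nat
  assumes sf: "square_free u" and "0 < B" and "B \<le> m"
  shows "B \<le> card {j \<in> {i..<i + m}. u (j div B) \<noteq> u ((j + m) div B)}"
proof -
  define t s q r where "t = m div B" and "s = m mod B" and "q = i div B" and "r = i mod B"
  have i: "i = q * B + r" and m: "m = t * B + s" and "r < B" and "s < B" and "0 < t"
    using assms by (simp_all add: t_def s_def q_def r_def div_greater_zero_iff)
  define F where "F c \<longleftrightarrow> B \<le> c + s" for c
  define g :: "nat \<Rightarrow> nat \<Rightarrow> nat"
    where "g p c = of_bool (u p \<noteq> u (p + t + of_bool (F c)))" for p c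
  note column_bound =
    square_free_column_mismatches[OF sf \<open>0 < t\<close> finite_atLeastLessThan finite_atLeastLessThan]
  have "card {j \<in> {i..<i + m}. u (j div B) \<noteq> u ((j + m) div B)}
      = (\<Sum>j\<in>{i..<i + m}. of_bool (u (j div B) \<noteq> u ((j + m) div B)))"
    by (subst sum_of_bool_eq) (auto intro: arg_cong[where f = card])
  also have "\<dots> = ((\<Sum>c\<in>{r..<B}. \<Sum>l<t. g (q + l) c) + (\<Sum>c\<in>{r..<min B (r + s)}. g (q + t) c))
      + ((\<Sum>c\<in>{0..<r}. \<Sum>l<t. g (Suc q + l) c) + (\<Sum>c\<in>{0..<r + s - B}. g (Suc q + t) c))"
    unfolding i m g_def F_def by (rule sum_window_by_offsets[OF \<open>r < B\<close> \<open>s < B\<close>])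
  finally have count: "card {j \<in> {i..<i + m}. u (j div B) \<noteq> u ((j + m) div B)} = \<dots>" .
  have "card {r..<B}
      \<le> (\<Sum>c\<in>{r..<B}. \<Sum>l<t. g (q + l) c) + (\<Sum>c\<in>{r..<min B (r + s)}. g (q + t) c)"
  proof -
    have "card {c \<in> {r..<B}. F c} \<le> card {max r (B - s)..<B}"
      by (rule card_mono) (auto simp: F_def)
    then have "card {c \<in> {r..<B}. F c} \<le> card {r..<min B (r + s)}"
      by simp
    then show ?thesis
      unfolding g_def by (rule column_bound)
  qed
  moreover have "card {0..<r}
      \<le> (\<Sum>c\<in>{0..<r}. \<Sum>l<t. g (Suc q + l) c) + (\<Sum>c\<in>{0..<r + s - B}. g (Suc q + t) c)"
  proof -
    have "card {c \<in> {0..<r}. F c} \<le> card {B - s..<r}"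
      by (rule card_mono) (auto simp: F_def)
    then have "card {c \<in> {0..<r}. F c} \<le> card {0..<r + s - B}"
      by simp
    then show ?thesis
      unfolding g_def by (rule column_bound)
  qed
  moreover have "card {r..<B} + card {0..<r} = B"
    using \<open>r < B\<close> by simp
  ultimately show ?thesis
    using count by linarith
qed

lemma hamming_map:
  "hamming (map f xs) (map g xs) = length (filter (\<lambda>x. f x \<noteq> g x) xs)"
  by (induction xs) (simp_all add: hamming_def)

lemma factor_of_map_upt:
  assumes "p @ v @ s = map g [a..<b]"
  shows "v = map g [a + length p..<a + length p + length v]"
proof -
  have "v = take (length v) (drop (length p) (p @ v @ s))"
    by simp
  also have "\<dots> = map g (take (length v) [a + length p..<b])"
    by (simp add: assms take_map drop_map)
  also have "\<dots> = map g [a + length p..<a + length p + length v]"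
  proof -
    have "length v = 0 \<or> a + length p + length v \<le> b"
      using arg_cong[OF assms, of length] by (cases "a \<le> b") auto
    then show ?thesis
      by (auto simp: take_upt)
  qed
  finally show ?thesis .
qed

lemma free_from_S3_blowup:
  assumes "square_free u"
  shows "free_from (S3 A k) (map (\<lambda>j. u (j div Suc k)) [0..<N])"
  unfolding free_from_def
proof (intro allI impI notI)
  let ?w = "\<lambda>j. u (j div Suc k)"
  fix v
  assume "subword v (map ?w [0..<N])" and "v \<in> S3 A k"
  then obtain p s X Y where word: "p @ X @ Y @ s = map ?w [0..<N]" and "length Y = length X"
    and long: "Suc k \<le> length X" and close: "hamming X Y \<le> k"
    unfolding subword_def S3_def by auto
  define P m where "P = length p" and "m = length X"
  have "X = map ?w [P..<P + m]"
    using factor_of_map_upt[OF word] by (simp add: P_def m_def)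
  moreover have "Y = map ?w [P + m..<P + m + m]"
    using factor_of_map_upt[of "p @ X" Y s] word \<open>length Y = length X\<close>
    by (simp add: P_def m_def)
  then have "Y = map (\<lambda>j. ?w (j + m)) [P..<P + m]"
    by (simp add: list_eq_iff_nth_eq ac_simps)
  ultimately have "hamming X Y = card {j \<in> {P..<P + m}. ?w j \<noteq> ?w (j + m)}"
    by (simp add: hamming_map distinct_length_filter Int_def conj_commute)
  moreover have "Suc k \<le> card {j \<in> {P..<P + m}. ?w j \<noteq> ?w (j + m)}"
    using square_free_blowup_mismatches[OF assms, of "Suc k" m P] long by (simp add: m_def)
  ultimately show False
    using close by simp
qed

lemma obtain_square_free_word:
  assumes "3 \<le> card A"
  obtains u :: "nat \<Rightarrow> 'a" where "square_free u" and "range u \<subseteq> A"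
proof -
  obtain C where "C \<subseteq> A" and "card C = 3" and "finite C"
    using obtain_subset_with_card_n[OF assms] by auto
  moreover have "card {-1, 0, 1 :: int} = 3"
    by simp
  ultimately obtain f where f: "bij_betw f {-1, 0, 1 :: int} C"
    using finite_same_card_bij[of "{-1, 0, 1 :: int}" C] by auto
  define d :: "nat \<Rightarrow> int" where "d n = of_bool (thue_morse (Suc n)) - of_bool (thue_morse n)" for n
  have "range d \<subseteq> {-1, 0, 1}"
    by (auto simp: d_def of_bool_def split: if_splits)
  then have "square_free (f \<circ> d)"
    unfolding d_def
    using square_free_differences[OF overlap_free_thue_morse] bij_betw_imp_inj_on[OF f]
    by (intro square_free_comp) (auto intro: inj_on_subset)
  moreover have "range (f \<circ> d) \<subseteq> A"
    using \<open>range d \<subseteq> _\<close> f \<open>C \<subseteq> A\<close> by (auto simp: bij_betw_def)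
  ultimately show ?thesis
    using that by blast
qed

theorem theorem5:
  fixes A :: "'a set" and n k :: nat
  assumes "finite A" and "card A = n" and "n \<ge> 3"
  shows "incomplete A (S3 A k)"
proof -
  obtain u where "square_free u" and "range u \<subseteq> A"
    using obtain_square_free_word assms by auto
  show ?thesis
    unfolding incomplete_def complete_def
  proof
    assume "\<exists>K. \<forall>w \<in> lists A. free_from (S3 A k) w \<longrightarrow> length w < K"
    then obtain K where "\<forall>w \<in> lists A. free_from (S3 A k) w \<longrightarrow> length w < K" ..
    moreover have "map (\<lambda>j. u (j div Suc k)) [0..<K] \<in> lists A"
      using \<open>range u \<subseteq> A\<close> by (auto simp: image_subset_iff)
    ultimately show False
      using free_from_S3_blowup[OF \<open>square_free u\<close>] by fastforce
  qed
qed

end
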